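(* Let $\alpha\in(0,1)$. With the full conformal region $\hat C_\alpha(X_{n+1})$, the upper approximate region $\tilde C_\alpha(X_{n+1})$ and the lower approximate region $\tilde C^{\mathrm{lo}}_\alpha(X_{n+1})$ as in the context, almost surely $$\tilde C^{\mathrm{lo}}_\alpha(X_{n+1})\subseteq\hat C_\alpha(X_{n+1})\subseteq\tilde C_\alpha(X_{n+1}),$$ and consequently, almost surely, the thickness satisfies $$\mathrm{THK}_\alpha(X_{n+1})\le\mathcal L\big(\tilde C_\alpha(X_{n+1})\setminus\tilde C^{\mathrm{lo}}_\alpha(X_{n+1})\big).$$
   Context: Let $\mathcal X\subset\mathbb R^d$, $\mathcal Y\subset\mathbb R$. $D=\{(X_1,Y_1),\dots,(X_n,Y_n)\}$ are random variables with values in $\mathcal X\times\mathcal Y$ and $(X_{n+1},Y_{n+1})$ is a further random pair. For $y\in\mathcal Y$ let $D^y=D\cup\{(X_{n+1},y)\}$ and let $\hat f_{D^y}$ be a predictor trained on $D^y$. Given $s:\mathcal Y\times\mathcal Y\to\mathbb R_+$, set $S_{D^y}(X_i,Y_i)=s(Y_i,\hat f_{D^y}(X_i))$ for $1\le i\le n$, $S_{D^y}(X_{n+1},y)=s(y,\hat f_{D^y}(X_{n+1}))$, $\hat\pi_D(X_{n+1},y)=\frac{1+\sum_{i=1}^n\mathbb 1\{S_{D^y}(X_i,Y_i)\ge S_{D^y}(X_{n+1},y)\}}{n+1}$ and $\hat C_\alpha(X_{n+1})=\{y:\hat\pi_D(X_{n+1},y)>\alpha\}$. For every $y$ let $\tilde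 S_{D^y}(X_i,Y_i)$ ($i\le n$), $\tilde S_{D^y}(X_{n+1},y)$ be approximate scores and $0\le\tau_i(y)<\infty$ be such that $|S_{D^y}(X_i,Y_i)-\tilde S_{D^y}(X_i,Y_i)|\le\tau_i(y)$ ($i\le n$) and $|S_{D^y}(X_{n+1},y)-\tilde S_{D^y}(X_{n+1},y)|\le\tau_{n+1}(y)$. Define $\tilde\pi_D(X_{n+1},y)=\frac{1+\sum_{i=1}^n\mathbb 1\{\tilde S_{D^y}(X_i,Y_i)+\tau_i(y)\ge\tilde S_{D^y}(X_{n+1},y)-\tau_{n+1}(y)\}}{n+1}$, $\tilde C_\alpha(X_{n+1})=\{y:\tilde\pi_D(X_{n+1},y)>\alpha\}$, $\tilde\pi^{\mathrm{lo}}_D(X_{n+1},y)=\frac{1+\sum_{i=1}^n\mathbb 1\{\tilde S_{D^y}(X_i,Y_i)-\tau_i(y)\ge\tilde S_{D^y}(X_{n+1},y)+\tau_{n+1}(y)\}}{n+1}$, $\tilde C^{\mathrm{lo}}_\alpha(X_{n+1})=\{y:\tilde\pi^{\mathrm{lo}}_D(X_{n+1},y)>\alpha\}$. The thickness is $\mathrm{THK}_\alpha(X_{n+1})=\mathcal L\big(\tilde C_\alpha(X_{n+1})\,\Delta\,\hat C_\alpha(X_{n+1})\big)$, with $\mathcal L$ the Lebesgue measure and $\Delta$ the symmetric difference. *)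

theory Defs
  imports "HOL-Probability.Probability"
begin

text \<open>Augmented data set D^y = D together with (x, y), as an ordered list
  (training may depend on the order, so this is the most general reading).\<close>
definition aug_data :: "nat \<Rightarrow> (nat \<Rightarrow> 'x) \<Rightarrow> (nat \<Rightarrow> real) \<Rightarrow> 'x \<Rightarrow> real \<Rightarrow> ('x \<times> real) list" where
  "aug_data n Xs Ys x y = map (\<lambda>i. (Xs i, Ys i)) [1..<n+1] @ [(x, y)]"

definition score_cal :: "(('x \<times> real) list \<Rightarrow> 'x \<Rightarrow> real) \<Rightarrow> (real \<Rightarrow> real \<Rightarrow> real)
    \<Rightarrow> nat \<Rightarrow> (nat \<Rightarrow> 'x) \<Rightarrow> (nat \<Rightarrow> real) \<Rightarrow> 'x \<Rightarrow> real \<Rightarrow> nat \<Rightarrow> real" where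
  "score_cal fit s n Xs Ys x y i = s (Ys i) (fit (aug_data n Xs Ys x y) (Xs i))"

definition score_test :: "(('x \<times> real) list \<Rightarrow> 'x \<Rightarrow> real) \<Rightarrow> (real \<Rightarrow> real \<Rightarrow> real)
    \<Rightarrow> nat \<Rightarrow> (nat \<Rightarrow> 'x) \<Rightarrow> (nat \<Rightarrow> real) \<Rightarrow> 'x \<Rightarrow> real \<Rightarrow> real" where
  "score_test fit s n Xs Ys x y = s y (fit (aug_data n Xs Ys x y) x)"

definition conf_pval :: "(('x \<times> real) list \<Rightarrow> 'x \<Rightarrow> real) \<Rightarrow> (real \<Rightarrow> real \<Rightarrow> real)
    \<Rightarrow> nat \<Rightarrow> (nat \<Rightarrow> 'x) \<Rightarrow> (nat \<Rightarrow> real) \<Rightarrow> 'x \<Rightarrow> real \<Rightarrow> real" where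
  "conf_pval fit s n Xs Ys x y =
     (1 + real (card {i\<in>{1..n}. score_cal fit s n Xs Ys x y i \<ge> score_test fit s n Xs Ys x y}))
       / (real n + 1)"

definition conf_region :: "real \<Rightarrow> real set \<Rightarrow> (('x \<times> real) list \<Rightarrow> 'x \<Rightarrow> real) \<Rightarrow> (real \<Rightarrow> real \<Rightarrow> real)
    \<Rightarrow> nat \<Rightarrow> (nat \<Rightarrow> 'x) \<Rightarrow> (nat \<Rightarrow> real) \<Rightarrow> 'x \<Rightarrow> real set" where
  "conf_region \<alpha> Yset fit s n Xs Ys x = {y\<in>Yset. conf_pval fit s n Xs Ys x y > \<alpha>}"

text \<open>Approximate p-values; St y i is the approximate score (i = n+1 is the test point),
  tau y i the error bound.\<close>
definition approx_pval_up :: "(real \<Rightarrow> nat \<Rightarrow> real) \<Rightarrow> (real \<Rightarrow> nat \<Rightarrow> real) \<Rightarrow> nat \<Rightarrow> real \<Rightarrow> real" where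
  "approx_pval_up St tau n y =
     (1 + real (card {i\<in>{1..n}. St y i + tau y i \<ge> St y (n+1) - tau y (n+1)})) / (real n + 1)"

definition approx_pval_lo :: "(real \<Rightarrow> nat \<Rightarrow> real) \<Rightarrow> (real \<Rightarrow> nat \<Rightarrow> real) \<Rightarrow> nat \<Rightarrow> real \<Rightarrow> real" where
  "approx_pval_lo St tau n y =
     (1 + real (card {i\<in>{1..n}. St y i - tau y i \<ge> St y (n+1) + tau y (n+1)})) / (real n + 1)"

definition approx_region_up :: "real \<Rightarrow> real set \<Rightarrow> (real \<Rightarrow> nat \<Rightarrow> real) \<Rightarrow> (real \<Rightarrow> nat \<Rightarrow> real) \<Rightarrow> nat \<Rightarrow> real set" where
  "approx_region_up \<alpha> Yset St tau n = {y\<in>Yset. approx_pval_up St tau n y > \<alpha>}"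

definition approx_region_lo :: "real \<Rightarrow> real set \<Rightarrow> (real \<Rightarrow> nat \<Rightarrow> real) \<Rightarrow> (real \<Rightarrow> nat \<Rightarrow> real) \<Rightarrow> nat \<Rightarrow> real set" where
  "approx_region_lo \<alpha> Yset St tau n = {y\<in>Yset. approx_pval_lo St tau n y > \<alpha>}"

text \<open>Lebesgue (outer) measure of an arbitrary subset of the reals; agrees with the
  Lebesgue measure on Lebesgue-measurable sets.\<close>
definition leb_outer :: "real set \<Rightarrow> ennreal" where
  "leb_outer A = (INF B\<in>{B\<in>sets lebesgue. A \<subseteq> B}. emeasure lebesgue B)"

definition sym_diff :: "'a set \<Rightarrow> 'a set \<Rightarrow> 'a set" where
  "sym_diff A B = (A - B) \<union> (B - A)"

end

theory Submission
  imports Defs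
begin

(* The error bounds place each true score in an interval around its approximation.
   If even the pessimistic ends compare favourably (lower calibration end above upper
   test end), the true scores compare favourably as well; and if the true scores do, the
   optimistic ends do. So the conformal p-value is sandwiched between the two approximate
   p-values for every y, and the regions are nested at every sample point. The
   statement thus holds surely.
   The thickness bound follows since C \<subseteq> U makes the symmetric difference
   U - C, which lies in U - L. *)

lemma rank_pval_mono:
  assumes "\<And>i. i \<in> {1..n} \<Longrightarrow> P i \<Longrightarrow> Q i"
  shows "(1 + real (card {i\<in>{1..n::nat}. P i})) / (real n + 1)
       \<le> (1 + real (card {i\<in>{1..n}. Q i})) / (real n + 1)"
proof -
  have "card {i\<in>{1..n}. P i} \<le> card {i\<in>{1..n}. Q i}"
    by (rule card_mono) (use assms in auto)
  then show ?thesis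
    by (intro divide_right_mono) auto
qed

lemma approx_pval_lo_le_conf_pval:
  assumes "\<And>i. i \<in> {1..n} \<Longrightarrow> \<bar>score_cal fit s n Xs Ys x y i - St y i\<bar> \<le> tau y i"
    and "\<bar>score_test fit s n Xs Ys x y - St y (n+1)\<bar> \<le> tau y (n+1)"
  shows "approx_pval_lo St tau n y \<le> conf_pval fit s n Xs Ys x y"
  unfolding approx_pval_lo_def conf_pval_def
  by (rule rank_pval_mono) (use assms in \<open>smt (verit)\<close>)

lemma conf_pval_le_approx_pval_up:
  assumes "\<And>i. i \<in> {1..n} \<Longrightarrow> \<bar>score_cal fit s n Xs Ys x y i - St y i\<bar> \<le> tau y i"
    and "\<bar>score_test fit s n Xs Ys x y - St y (n+1)\<bar> \<le> tau y (n+1)"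
  shows "conf_pval fit s n Xs Ys x y \<le> approx_pval_up St tau n y"
  unfolding approx_pval_up_def conf_pval_def
  by (rule rank_pval_mono) (use assms in \<open>smt (verit)\<close>)

lemma approx_region_lo_subset_conf_region:
  assumes "\<And>y i. y \<in> Yset \<Longrightarrow> i \<in> {1..n} \<Longrightarrow>
             \<bar>score_cal fit s n Xs Ys x y i - St y i\<bar> \<le> tau y i"
    and "\<And>y. y \<in> Yset \<Longrightarrow> \<bar>score_test fit s n Xs Ys x y - St y (n+1)\<bar> \<le> tau y (n+1)"
  shows "approx_region_lo \<alpha> Yset St tau n \<subseteq> conf_region \<alpha> Yset fit s n Xs Ys x"
proof
  fix y assume "y \<in> approx_region_lo \<alpha> Yset St tau n"
  moreover from this have "approx_pval_lo St tau n y \<le> conf_pval fit s n Xs Ys x y"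
    by (intro approx_pval_lo_le_conf_pval assms) (auto simp: approx_region_lo_def)
  ultimately show "y \<in> conf_region \<alpha> Yset fit s n Xs Ys x"
    by (simp add: approx_region_lo_def conf_region_def)
qed

lemma conf_region_subset_approx_region_up:
  assumes "\<And>y i. y \<in> Yset \<Longrightarrow> i \<in> {1..n} \<Longrightarrow>
             \<bar>score_cal fit s n Xs Ys x y i - St y i\<bar> \<le> tau y i"
    and "\<And>y. y \<in> Yset \<Longrightarrow> \<bar>score_test fit s n Xs Ys x y - St y (n+1)\<bar> \<le> tau y (n+1)"
  shows "conf_region \<alpha> Yset fit s n Xs Ys x \<subseteq> approx_region_up \<alpha> Yset St tau n"
proof
  fix y assume "y \<in> conf_region \<alpha> Yset fit s n Xs Ys x"
  moreover from this have "conf_pval fit s n Xs Ys x y \<le> approx_pval_up St tau n y"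
    by (intro conf_pval_le_approx_pval_up assms) (auto simp: conf_region_def)
  ultimately show "y \<in> approx_region_up \<alpha> Yset St tau n"
    by (simp add: approx_region_up_def conf_region_def)
qed

lemma leb_outer_mono: "A \<subseteq> B \<Longrightarrow> leb_outer A \<le> leb_outer B"
  unfolding leb_outer_def by (rule INF_superset_mono) auto

lemma sym_diff_subset_Diff: "L \<subseteq> C \<Longrightarrow> C \<subseteq> U \<Longrightarrow> sym_diff U C \<subseteq> U - L"
  by (auto simp: sym_diff_def)

theorem lemma7:
  fixes M :: "'w measure"
    and X :: "nat \<Rightarrow> 'w \<Rightarrow> real ^ 'd" and Y :: "nat \<Rightarrow> 'w \<Rightarrow> real"
    and Xset :: "(real ^ 'd) set" and Yset :: "real set"
    and fit :: "((real ^ 'd) \<times> real) list \<Rightarrow> real ^ 'd \<Rightarrow> real"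
    and s :: "real \<Rightarrow> real \<Rightarrow> real"
    and St :: "'w \<Rightarrow> real \<Rightarrow> nat \<Rightarrow> real" and tau :: "'w \<Rightarrow> real \<Rightarrow> nat \<Rightarrow> real"
    and n :: nat and \<alpha> :: real
  assumes "prob_space M"
    and "\<And>i. i \<in> {1..n+1} \<Longrightarrow> X i \<in> borel_measurable M"
    and "\<And>i. i \<in> {1..n+1} \<Longrightarrow> Y i \<in> borel_measurable M"
    and "\<And>i \<omega>. i \<in> {1..n+1} \<Longrightarrow> \<omega> \<in> space M \<Longrightarrow> X i \<omega> \<in> Xset \<and> Y i \<omega> \<in> Yset"
    and "\<And>a b. s a b \<ge> 0"
    and "0 < \<alpha>" and "\<alpha> < 1"
    and "\<And>\<omega> y i. \<omega> \<in> space M \<Longrightarrow> y \<in> Yset \<Longrightarrow> i \<in> {1..n+1} \<Longrightarrow> 0 \<le> tau \<omega> y i"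
    and "\<And>\<omega> y i. \<omega> \<in> space M \<Longrightarrow> y \<in> Yset \<Longrightarrow> i \<in> {1..n} \<Longrightarrow>
           \<bar>score_cal fit s n (\<lambda>j. X j \<omega>) (\<lambda>j. Y j \<omega>) (X (n+1) \<omega>) y i - St \<omega> y i\<bar> \<le> tau \<omega> y i"
    and "\<And>\<omega> y. \<omega> \<in> space M \<Longrightarrow> y \<in> Yset \<Longrightarrow>
           \<bar>score_test fit s n (\<lambda>j. X j \<omega>) (\<lambda>j. Y j \<omega>) (X (n+1) \<omega>) y - St \<omega> y (n+1)\<bar> \<le> tau \<omega> y (n+1)"
  shows "(AE \<omega> in M.
            approx_region_lo \<alpha> Yset (St \<omega>) (tau \<omega>) n
              \<subseteq> conf_region \<alpha> Yset fit s n (\<lambda>j. X j \<omega>) (\<lambda>j. Y j \<omega>) (X (n+1) \<omega>)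
          \<and> conf_region \<alpha> Yset fit s n (\<lambda>j. X j \<omega>) (\<lambda>j. Y j \<omega>) (X (n+1) \<omega>)
              \<subseteq> approx_region_up \<alpha> Yset (St \<omega>) (tau \<omega>) n)
       \<and> (AE \<omega> in M.
            leb_outer (sym_diff (approx_region_up \<alpha> Yset (St \<omega>) (tau \<omega>) n)
                                (conf_region \<alpha> Yset fit s n (\<lambda>j. X j \<omega>) (\<lambda>j. Y j \<omega>) (X (n+1) \<omega>)))
            \<le> leb_outer (approx_region_up \<alpha> Yset (St \<omega>) (tau \<omega>) n
                          - approx_region_lo \<alpha> Yset (St \<omega>) (tau \<omega>) n))"
proof -
  let ?L = "\<lambda>\<omega>. approx_region_lo \<alpha> Yset (St \<omega>) (tau \<omega>) n"
  let ?C = "\<lambda>\<omega>. conf_region \<alpha> Yset fit s n (\<lambda>j. X j \<omega>) (\<lambda>j. Y j \<omega>) (X (n+1) \<omega>)"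
  let ?U = "\<lambda>\<omega>. approx_region_up \<alpha> Yset (St \<omega>) (tau \<omega>) n"
  have lo: "?L \<omega> \<subseteq> ?C \<omega>" if "\<omega> \<in> space M" for \<omega>
    by (rule approx_region_lo_subset_conf_region) (use assms(9,10)[OF that] in auto)
  have up: "?C \<omega> \<subseteq> ?U \<omega>" if "\<omega> \<in> space M" for \<omega>
    by (rule conf_region_subset_approx_region_up) (use assms(9,10)[OF that] in auto)
  have "leb_outer (sym_diff (?U \<omega>) (?C \<omega>)) \<le> leb_outer (?U \<omega> - ?L \<omega>)"
    if "\<omega> \<in> space M" for \<omega>
    by (intro leb_outer_mono sym_diff_subset_Diff lo up that)
  with lo up show ?thesis
    by (auto intro!: AE_I2)
qed

end
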